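(* With $\delta=\sum_{k=1}^m t_k\partial_{t_k}$, the recurrence coefficients satisfy the Toda-type equations \[ \delta\ln\beta_n=\alpha_{n-1}-\alpha_n+2,\qquad (\delta-1)\alpha_n=\beta_n-\beta_{n+1}. \]
   Context: Let $m\ge1$, $\alpha>-1$, $0<t_1<\dots<t_m$, real $\omega_0,\dots,\omega_m$ with $\sum_{k=0}^\ell\omega_k\ge0$ for $\ell=0,\dots,m$, $\theta$ the Heaviside function, $w(x;\vec t)=x^\alpha e^{-x}\big(\omega_0+\sum_k\omega_k\theta(x-t_k)\big)$ on $[0,\infty)$, $P_n$ the monic orthogonal polynomials w.r.t. $w$, and $\alpha_n(\vec t),\beta_n(\vec t)$ the coefficients of the recurrence $xP_n=P_{n+1}+\alpha_nP_n+\beta_nP_{n-1}$. *)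

theory Defs
  imports "HOL-Analysis.Analysis" "HOL-Computational_Algebra.Polynomial"
begin

text \<open>Heaviside step function (value at 0 is irrelevant: a null set).\<close>
definition heaviside :: "real \<Rightarrow> real" where
  "heaviside y = (if 0 < y then 1 else 0)"

definition lweight :: "real \<Rightarrow> (nat \<Rightarrow> real) \<Rightarrow> nat \<Rightarrow> (nat \<Rightarrow> real) \<Rightarrow> real \<Rightarrow> real" where
  "lweight a \<omega> m t x =
     x powr a * exp (- x) * (\<omega> 0 + (\<Sum>k=1..m. \<omega> k * heaviside (x - t k)))"

definition is_monic_OP :: "(real \<Rightarrow> real) \<Rightarrow> nat \<Rightarrow> real poly \<Rightarrow> bool" where
  "is_monic_OP w n p \<longleftrightarrow>
     degree p = n \<and> lead_coeff p = 1 \<and>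
     (\<forall>j<n. (LINT x:{0<..}|lborel. x ^ j * poly p x * w x) = 0)"

definition monicOP :: "(real \<Rightarrow> real) \<Rightarrow> nat \<Rightarrow> real poly" where
  "monicOP w n = (THE p. is_monic_OP w n p)"

definition prevOP :: "(real \<Rightarrow> real) \<Rightarrow> nat \<Rightarrow> real poly" where
  "prevOP w n = (if n = 0 then 0 else monicOP w (n - 1))"

text \<open>Recurrence coefficients: x P_n = P_{n+1} + alpha_n P_n + beta_n P_{n-1}.
  For n = 0 the coefficient beta_0 is not determined by the recurrence; we use the
  standard convention beta_0 = 0.\<close>
definition rec_alpha :: "(real \<Rightarrow> real) \<Rightarrow> nat \<Rightarrow> real" where
  "rec_alpha w n = (THE a. \<exists>b. [:0, 1:] * monicOP w n =
       monicOP w (Suc n) + smult a (monicOP w n) + smult b (prevOP w n))"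

definition rec_beta :: "(real \<Rightarrow> real) \<Rightarrow> nat \<Rightarrow> real" where
  "rec_beta w n = (if n = 0 then 0 else (THE b. \<exists>a. [:0, 1:] * monicOP w n =
       monicOP w (Suc n) + smult a (monicOP w n) + smult b (prevOP w n)))"

end

(*
  With h_n = L(P_n^2), the monic orthogonal polynomials of a positive definite functional L obey
  x P_n = P_(n+1) + alpha_n P_n + beta_n P_(n-1) with alpha_n = L(x P_n^2) / h_n and
  beta_n = h_n / h_(n-1); building P_n by this recurrence identifies rec_alpha and rec_beta.
  If L depends differentiably on a parameter s, with derivative L', orthogonality gives
  d h_n / ds = L'(P_n^2) and, writing P_n = x^n + p_n x^(n-1) + ..., also
  d p_n / ds = - L'(P_(n-1) P_n) / h_(n-1), while alpha_n = p_n - p_(n+1).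
  For the weight x^a e^(-x) (omega_0 + sum_k omega_k theta(x - t_k)) the derivative of L in t_k is
  p |-> - omega_k t_k^a e^(-t_k) p(t_k).  Since (x^(a+1) e^(-x) p)' = x^a e^(-x) D p with
  D p = (a + 1) p + x p' - x p, integrating over (t_k, oo) shows that sum_k t_k d/dt_k maps L to
  L o D.  Finally, orthogonality evaluates L(D(P_n^2)) = (a + 1 + 2n - alpha_n) h_n and
  L(D(P_(n-1) P_n)) = - (p_n + beta_n) h_(n-1), and the two Toda equations follow by subtraction.
*)
theory Submission
  imports Defs "HOL-Real_Asymp.Real_Asymp"
begin

section \<open>Polynomials of bounded degree and linear functionals\<close>

definition deg_below :: "'a::zero poly \<Rightarrow> nat \<Rightarrow> bool" where
  "deg_below p n \<longleftrightarrow> (\<forall>i\<ge>n. coeff p i = 0)"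

lemma deg_below_mono: "deg_below p n \<Longrightarrow> n \<le> k \<Longrightarrow> deg_below p k"
  by (auto simp: deg_below_def)

lemma deg_below_add: "deg_below p n \<Longrightarrow> deg_below q n \<Longrightarrow> deg_below (p + q) n"
  by (auto simp: deg_below_def)

lemma deg_below_diff: "deg_below p n \<Longrightarrow> deg_below q n \<Longrightarrow> deg_below (p - q) n"
  by (auto simp: deg_below_def)

lemma deg_below_smult: "deg_below p n \<Longrightarrow> deg_below (smult c p) n"
  by (auto simp: deg_below_def)

lemma deg_below_iff: "deg_below p n \<longleftrightarrow> p = 0 \<or> degree p < n"
proof
  assume "deg_below p n"
  then show "p = 0 \<or> degree p < n"
    unfolding deg_below_def by (metis leading_coeff_0_iff not_le)
qed (auto simp: deg_below_def intro: coeff_eq_0)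

lemma deg_below_mult: "deg_below p n \<Longrightarrow> deg_below q k \<Longrightarrow> deg_below (p * q) (n + k)"
  unfolding deg_below_iff using degree_mult_le[of p q] by auto

lemma deg_below_x_mult: "deg_below p n \<Longrightarrow> deg_below ([:0, 1:] * p) (Suc n)"
  by (auto simp: deg_below_def coeff_pCons split: nat.splits)

lemma deg_below_eq_sum_monom:
  fixes p :: "'a::comm_semiring_1 poly"
  shows "deg_below p n \<Longrightarrow> p = (\<Sum>j<n. smult (coeff p j) (monom 1 j))"
  by (auto simp: poly_eq_iff coeff_sum deg_below_def smult_monom
      intro!: sym[OF sum.neutral] split: if_splits)

locale lin_functional =
  fixes L :: "real poly \<Rightarrow> real"
  assumes add [simp]: "L (p + q) = L p + L q"
    and smult [simp]: "L (smult c p) = c * L p"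
begin

lemma zero [simp]: "L 0 = 0"
  using smult[of 0 0] by simp

lemma diff [simp]: "L (p - q) = L p - L q"
  using add[of p "- q"] smult[of "-1" q] by simp

lemma sum: "L (\<Sum>i\<in>A. f i) = (\<Sum>i\<in>A. L (f i))"
  by (induction A rule: infinite_finite_induct) auto

lemma eq_sum_monom: "deg_below p n \<Longrightarrow> L p = (\<Sum>j<n. coeff p j * L (monom 1 j))"
  by (subst deg_below_eq_sum_monom) (auto simp: sum)

lemma orthogonal_if_orthogonal_monom:
  assumes "\<forall>j<n. L (monom 1 j * p) = 0" and "deg_below r n"
  shows "L (r * p) = 0"
proof -
  have "L (r * p) = L (\<Sum>j<n. smult (coeff r j) (monom 1 j * p))"
    by (subst deg_below_eq_sum_monom[OF assms(2)]) (simp add: sum_distrib_right)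
  also have "\<dots> = 0"
    using assms(1) by (simp add: sum)
  finally show ?thesis .
qed

end

section \<open>Monic orthogonal polynomials from the three-term recurrence\<close>

text \<open>For \<open>n = 0\<close> the junk term \<open>ortho L (0 - 1)\<close> is multiplied by \<open>0\<close>.\<close>
fun ortho :: "(real poly \<Rightarrow> real) \<Rightarrow> nat \<Rightarrow> real poly" where
  "ortho L 0 = 1"
| "ortho L (Suc n) =
     [:0, 1:] * ortho L n
     - smult (L ([:0, 1:] * ortho L n * ortho L n) / L (ortho L n * ortho L n)) (ortho L n)
     - smult (if n = 0 then 0 else L (ortho L n * ortho L n) / L (ortho L (n - 1) * ortho L (n - 1)))
         (ortho L (n - 1))"

declare ortho.simps(2) [simp del]

definition ortho_prev :: "(real poly \<Rightarrow> real) \<Rightarrow> nat \<Rightarrow> real poly" where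
  "ortho_prev L n = (if n = 0 then 0 else ortho L (n - 1))"

definition ortho_norm :: "(real poly \<Rightarrow> real) \<Rightarrow> nat \<Rightarrow> real" where
  "ortho_norm L n = L (ortho L n * ortho L n)"

definition ortho_alpha :: "(real poly \<Rightarrow> real) \<Rightarrow> nat \<Rightarrow> real" where
  "ortho_alpha L n = L ([:0, 1:] * ortho L n * ortho L n) / ortho_norm L n"

definition ortho_beta :: "(real poly \<Rightarrow> real) \<Rightarrow> nat \<Rightarrow> real" where
  "ortho_beta L n = (if n = 0 then 0 else ortho_norm L n / ortho_norm L (n - 1))"

lemma ortho_Suc:
  "ortho L (Suc n) = [:0, 1:] * ortho L n - smult (ortho_alpha L n) (ortho L n)
     - smult (ortho_beta L n) (ortho_prev L n)"
  by (simp add: ortho.simps(2) ortho_alpha_def ortho_beta_def ortho_prev_def ortho_norm_def)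

lemma x_mult_ortho:
  "[:0, 1:] * ortho L n =
     ortho L (Suc n) + smult (ortho_alpha L n) (ortho L n) + smult (ortho_beta L n) (ortho_prev L n)"
  unfolding ortho_Suc by simp

lemma ortho_monic:
  "coeff (ortho L n) n = 1 \<and> deg_below (ortho L n) (Suc n) \<and> deg_below (ortho_prev L n) n"
proof (induction n)
  case 0
  then show ?case by (simp add: deg_below_def ortho_prev_def)
next
  case (Suc n)
  then have P: "coeff (ortho L n) n = 1" "deg_below (ortho L n) (Suc n)"
    and Q: "deg_below (ortho_prev L n) (Suc (Suc n))" "coeff (ortho_prev L n) (Suc n) = 0"
    using deg_below_mono[of "ortho_prev L n" n] by (auto simp: deg_below_def)
  have "deg_below (ortho L (Suc n)) (Suc (Suc n))"
    unfolding ortho_Suc using P(2) Q deg_below_mono[OF P(2), of "Suc (Suc n)"]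
    by (intro deg_below_diff deg_below_smult deg_below_x_mult) auto
  moreover have "coeff (ortho L (Suc n)) (Suc n) = 1"
    using P Q by (simp add: ortho_Suc coeff_pCons deg_below_def)
  ultimately show ?case
    using P by (simp add: ortho_prev_def)
qed

lemma coeff_ortho_self [simp]: "coeff (ortho L n) n = 1"
  and deg_below_ortho: "deg_below (ortho L n) (Suc n)"
  and deg_below_ortho_prev: "deg_below (ortho_prev L n) n"
  using ortho_monic by blast+

lemma ortho_nonzero: "ortho L n \<noteq> 0"
  using coeff_ortho_self[of L n] by (auto simp del: coeff_ortho_self)

lemma degree_ortho [simp]: "degree (ortho L n) = n"
proof (rule antisym)
  show "degree (ortho L n) \<le> n"
    using deg_below_ortho[of L n] ortho_nonzero[of L n] by (simp add: deg_below_iff)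
  show "n \<le> degree (ortho L n)"
    by (rule le_degree) simp
qed

lemma deg_below_sub_ortho:
  assumes "deg_below r (Suc n)"
  shows "deg_below (r - smult (coeff r n) (ortho L n)) n"
  unfolding deg_below_def
proof (intro allI impI)
  fix i assume "n \<le> i"
  then show "coeff (r - smult (coeff r n) (ortho L n)) i = 0"
    using assms deg_below_ortho[of L n] by (cases "i = n") (auto simp: deg_below_def)
qed

lemma deg_below_x_mult_ortho: "deg_below ([:0, 1:] * ortho L n - ortho L (Suc n)) (Suc n)"
proof -
  have "deg_below (ortho_prev L n) (Suc n)"
    using deg_below_mono[OF deg_below_ortho_prev] by simp
  then have "deg_below (smult (ortho_alpha L n) (ortho L n) + smult (ortho_beta L n) (ortho_prev L n)) (Suc n)"
    by (intro deg_below_add deg_below_smult deg_below_ortho)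
  then show ?thesis
    by (subst x_mult_ortho) simp
qed

lemma recurrence_coeffs_unique:
  assumes "[:0, 1:] * ortho L n = ortho L (Suc n) + smult a (ortho L n) + smult b (ortho_prev L n)"
  shows "a = ortho_alpha L n" and "n \<noteq> 0 \<Longrightarrow> b = ortho_beta L n"
proof -
  have diff: "smult (a - ortho_alpha L n) (ortho L n) = smult (ortho_beta L n - b) (ortho_prev L n)"
    using assms x_mult_ortho[of L n] by (simp add: smult_diff_left algebra_simps)
  have "coeff (ortho_prev L n) n = 0"
    using deg_below_ortho_prev[of L n] by (simp add: deg_below_def)
  then have "coeff (smult (a - ortho_alpha L n) (ortho L n)) n = 0"
    by (simp only: diff coeff_smult)
  then show a: "a = ortho_alpha L n"
    by simp
  assume "n \<noteq> 0"
  then have "ortho_prev L n \<noteq> 0"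
    by (simp add: ortho_prev_def ortho_nonzero)
  with diff a show "b = ortho_beta L n"
    by simp
qed

text \<open>The case \<open>n = 0\<close> is singled out because \<open>coeff (ortho L 0) (0 - 1) = 1\<close>.\<close>
definition ortho_subleading :: "(real poly \<Rightarrow> real) \<Rightarrow> nat \<Rightarrow> real" where
  "ortho_subleading L n = (if n = 0 then 0 else coeff (ortho L n) (n - 1))"

lemma ortho_alpha_eq_subleading:
  "ortho_alpha L n = ortho_subleading L n - ortho_subleading L (Suc n)"
proof -
  have "coeff (ortho_prev L n) n = 0"
    using deg_below_ortho_prev[of L n] by (simp add: deg_below_def)
  then show ?thesis
    by (simp add: ortho_subleading_def ortho_Suc coeff_pCons split: nat.split)
qed

context lin_functional
begin

lemma orthogonal_if_orthogonal_ortho: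
  assumes "\<forall>j<n. L (ortho L j * p) = 0" and "deg_below r n"
  shows "L (r * p) = 0"
  using assms
proof (induction n arbitrary: r)
  case 0
  then show ?case by (simp add: deg_below_iff)
next
  case (Suc n)
  define c where "c = coeff r n"
  have "r * p = smult c (ortho L n * p) + (r - smult c (ortho L n)) * p"
    by (simp add: left_diff_distrib)
  then show ?case
    using Suc deg_below_sub_ortho[of r n L] by (simp add: c_def)
qed

end

locale posdef_functional = lin_functional +
  assumes pos: "p \<noteq> 0 \<Longrightarrow> L (p * p) > 0"
begin

lemma ortho_norm_pos: "ortho_norm L n > 0"
  unfolding ortho_norm_def by (rule pos[OF ortho_nonzero])

lemma ortho_orthogonal: "j < n \<Longrightarrow> L (ortho L j * ortho L n) = 0"
proof (induction n arbitrary: j rule: less_induct)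
  case (less n)
  then obtain k where n: "n = Suc k" by (cases n) auto
  have IH: "L (ortho L i * ortho L i') = 0" if "i < i'" "i' \<le> k" for i i'
    using less.IH that n by simp
  have orth_k: "L (r * ortho L k) = 0" if "deg_below r k" for r
    using orthogonal_if_orthogonal_ortho[OF _ that] IH by simp
  have h: "ortho_norm L k > 0" "ortho_norm L (k - 1) > 0"
    using ortho_norm_pos by auto
  have split: "L (ortho L j * ortho L n) = L ([:0, 1:] * ortho L j * ortho L k)
      - ortho_alpha L k * L (ortho L j * ortho L k) - ortho_beta L k * L (ortho L j * ortho_prev L k)"
    unfolding n ortho_Suc by (simp add: right_diff_distrib mult.assoc)
  show ?case
  proof (cases "j = k")
    case True
    have "L (ortho L k * ortho_prev L k) = 0"
      using IH[of "k - 1" k] by (simp add: ortho_prev_def mult.commute)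
    then show ?thesis
      using split h True by (simp add: ortho_alpha_def ortho_norm_def)
  next
    case False
    with less.prems n have j: "j < k" by simp
    have "L ([:0, 1:] * ortho L j * ortho L k) = L (ortho L (Suc j) * ortho L k)
        + L (([:0, 1:] * ortho L j - ortho L (Suc j)) * ortho L k)"
      by (simp add: left_diff_distrib)
    also have "L (([:0, 1:] * ortho L j - ortho L (Suc j)) * ortho L k) = 0"
      using j by (intro orth_k deg_below_mono[OF deg_below_x_mult_ortho]) simp
    finally have x: "L ([:0, 1:] * ortho L j * ortho L k) = (if Suc j = k then ortho_norm L k else 0)"
      using IH[of "Suc j" k] j by (simp add: ortho_norm_def)
    have prev: "L (ortho L j * ortho_prev L k) = (if Suc j = k then ortho_norm L (k - 1) else 0)"
      using IH[of j "k - 1"] j by (auto simp: ortho_prev_def ortho_norm_def)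
    show ?thesis
      using split x prev IH[of j k] j h by (auto simp: ortho_beta_def)
  qed
qed

lemma orthogonal: "deg_below r n \<Longrightarrow> L (r * ortho L n) = 0"
  using orthogonal_if_orthogonal_ortho ortho_orthogonal by blast

lemma ortho_unique:
  assumes "degree p = n" and "lead_coeff p = 1" and "\<forall>j<n. L (monom 1 j * p) = 0"
  shows "p = ortho L n"
proof -
  define d where "d = p - ortho L n"
  have d: "deg_below d n"
    unfolding deg_below_def d_def
  proof (intro allI impI)
    fix i assume "n \<le> i"
    then show "coeff (p - ortho L n) i = 0"
      using assms(1,2) deg_below_ortho[of L n] coeff_eq_0[of p i]
      by (cases "i = n") (auto simp: deg_below_def)
  qed
  have "L (d * d) = L (d * p) - L (d * ortho L n)"
    by (simp add: d_def right_diff_distrib)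
  also have "\<dots> = 0"
    using orthogonal_if_orthogonal_monom[OF assms(3) d] orthogonal[OF d] by simp
  finally have "d = 0"
    using pos by fastforce
  then show ?thesis
    by (simp add: d_def)
qed

end

definition weight_functional :: "(real \<Rightarrow> real) \<Rightarrow> real poly \<Rightarrow> real" where
  "weight_functional w p = (LINT x:{0<..}|lborel. poly p x * w x)"

lemma is_monic_OP_iff:
  "is_monic_OP w n p \<longleftrightarrow>
     degree p = n \<and> lead_coeff p = 1 \<and> (\<forall>j<n. weight_functional w (monom 1 j * p) = 0)"
  unfolding is_monic_OP_def weight_functional_def by (simp add: poly_monom)

context
  fixes w :: "real \<Rightarrow> real"
  assumes posdef: "posdef_functional (weight_functional w)"
begin

interpretation posdef_functional "weight_functional w"
  by (rule posdef)

lemma monicOP_eq_ortho: "monicOP w n = ortho (weight_functional w) n"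
  unfolding monicOP_def
proof (rule the_equality)
  show "is_monic_OP w n (ortho (weight_functional w) n)"
    unfolding is_monic_OP_iff using orthogonal by (auto simp: deg_below_def)
qed (auto simp: is_monic_OP_iff intro: ortho_unique)

lemma prevOP_eq_ortho_prev: "prevOP w n = ortho_prev (weight_functional w) n"
  by (simp add: prevOP_def ortho_prev_def monicOP_eq_ortho)

lemma rec_alpha_eq_ortho_alpha: "rec_alpha w n = ortho_alpha (weight_functional w) n"
  unfolding rec_alpha_def monicOP_eq_ortho prevOP_eq_ortho_prev
  using x_mult_ortho recurrence_coeffs_unique(1) by blast

lemma rec_beta_eq_ortho_beta: "rec_beta w n = ortho_beta (weight_functional w) n"
proof (cases "n = 0")
  case False
  then show ?thesis
    unfolding rec_beta_def monicOP_eq_ortho prevOP_eq_ortho_prev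
    using x_mult_ortho recurrence_coeffs_unique(2) by auto
qed (simp add: rec_beta_def ortho_beta_def)

end

section \<open>The dilation operator\<close>

text \<open>\<open>dilation_op a p\<close> is chosen so that
  \<open>(x\<^sup>a\<^sup>+\<^sup>1 e\<^sup>-\<^sup>x p)' = x\<^sup>a e\<^sup>-\<^sup>x (dilation_op a p)\<close>, see \<open>has_real_derivative_dilation_op\<close>.\<close>
definition dilation_op :: "real \<Rightarrow> real poly \<Rightarrow> real poly" where
  "dilation_op a p = smult (a + 1) p + [:0, 1:] * pderiv p - [:0, 1:] * p"

lemma coeff_pCons_0_pderiv: "coeff (pCons 0 (pderiv p)) i = of_nat i * coeff p i"
  by (cases i) (simp_all add: coeff_pderiv)

lemma deg_below_x_mult_pderiv_ortho:
  "deg_below ([:0, 1:] * pderiv (ortho L n) - smult (of_nat n) (ortho L n)) n"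
  unfolding deg_below_def
proof (intro allI impI)
  fix i assume "n \<le> i"
  then show "coeff ([:0, 1:] * pderiv (ortho L n) - smult (of_nat n) (ortho L n)) i = 0"
    using deg_below_ortho[of L n]
    by (cases "i = n") (auto simp: coeff_pCons_0_pderiv deg_below_def)
qed

context posdef_functional
begin

lemma dilation_ortho_sq:
  "L (dilation_op a (ortho L n * ortho L n)) = (a + 1 + 2 * n - ortho_alpha L n) * ortho_norm L n"
proof -
  define P where "P = ortho L n"
  define Q where "Q = [:0, 1:] * pderiv P"
  have "L (Q * P) = n * ortho_norm L n + L ((Q - smult (of_nat n) P) * P)"
    by (simp add: P_def ortho_norm_def left_diff_distrib)
  also have "L ((Q - smult (of_nat n) P) * P) = 0"
    unfolding Q_def P_def by (rule orthogonal[OF deg_below_x_mult_pderiv_ortho])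
  finally have QP: "L (Q * P) = n * ortho_norm L n"
    by simp
  have xPP: "L ([:0, 1:] * P * P) = ortho_alpha L n * ortho_norm L n"
    using ortho_norm_pos[of n] by (simp add: ortho_alpha_def P_def)
  have "dilation_op a (P * P) = smult (a + 1) (P * P) + (Q * P + Q * P) - [:0, 1:] * P * P"
    by (simp add: dilation_op_def pderiv_mult Q_def algebra_simps)
  then have "L (dilation_op a (P * P)) = (a + 1) * ortho_norm L n + (L (Q * P) + L (Q * P))
      - L ([:0, 1:] * P * P)"
    by (simp only: add diff smult P_def ortho_norm_def)
  then show ?thesis
    using QP xPP by (simp add: P_def algebra_simps)
qed

lemma x_mult_pderiv_ortho_Suc:
  "L (([:0, 1:] * pderiv (ortho L (Suc k))) * ortho L k) = - coeff (ortho L (Suc k)) k * ortho_norm L k"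
proof -
  define P R where "P = ortho L k" and "R = ortho L (Suc k)"
  define r where "r = [:0, 1:] * pderiv R - smult (of_nat (Suc k)) R"
  have r: "deg_below r (Suc k)" and coeff_r: "coeff r k = - coeff R k"
    unfolding r_def R_def by (rule deg_below_x_mult_pderiv_ortho) (simp add: coeff_pCons_0_pderiv algebra_simps)
  have "([:0, 1:] * pderiv R) * P = smult (of_nat (Suc k)) (P * R) + smult (coeff r k) (P * P)
      + (r - smult (coeff r k) P) * P"
    by (simp add: r_def algebra_simps)
  moreover have "L (P * R) = 0"
    unfolding P_def R_def by (rule ortho_orthogonal) simp
  ultimately show ?thesis
    using orthogonal[OF deg_below_sub_ortho[OF r]] coeff_r by (simp add: P_def R_def ortho_norm_def)
qed

lemma dilation_ortho_ortho_Suc: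
  "L (dilation_op a (ortho L k * ortho L (Suc k))) =
     - coeff (ortho L (Suc k)) k * ortho_norm L k - ortho_norm L (Suc k)"
proof -
  define P R where "P = ortho L k" and "R = ortho L (Suc k)"
  have PR: "L (P * R) = 0"
    unfolding P_def R_def by (rule ortho_orthogonal) simp
  have xP'R: "L (([:0, 1:] * pderiv P) * R) = 0"
    using orthogonal[of "[:0, 1:] * pderiv P" "Suc k"] deg_below_x_mult_pderiv_ortho[of L k]
      deg_below_ortho[of L k]
    by (simp add: P_def R_def deg_below_def coeff_pCons_0_pderiv)
  have xPR: "L ([:0, 1:] * P * R) = ortho_norm L (Suc k)"
  proof -
    have "[:0, 1:] * P * R = R * R + ([:0, 1:] * P - R) * R"
      by (simp add: algebra_simps)
    then show ?thesis
      using orthogonal[OF deg_below_x_mult_ortho] by (simp add: P_def R_def ortho_norm_def)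
  qed
  have "dilation_op a (P * R) = smult (a + 1) (P * R) + ([:0, 1:] * pderiv P) * R
      + ([:0, 1:] * pderiv R) * P - [:0, 1:] * P * R"
    by (simp add: dilation_op_def pderiv_mult algebra_simps)
  then show ?thesis
    using PR xP'R xPR x_mult_pderiv_ortho_Suc[of k] by (simp add: P_def R_def)
qed

lemma dilation_prev_ortho:
  "L (dilation_op a (ortho_prev L n * ortho L n)) =
     - (ortho_subleading L n + ortho_beta L n) * ortho_norm L (n - 1)"
proof (cases n)
  case 0
  then show ?thesis
    by (simp add: ortho_prev_def ortho_subleading_def ortho_beta_def dilation_op_def)
next
  case (Suc k)
  have "ortho_beta L (Suc k) * ortho_norm L k = ortho_norm L (Suc k)"
    using ortho_norm_pos[of k] by (simp add: ortho_beta_def)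
  then show ?thesis
    using Suc dilation_ortho_ortho_Suc[of a k]
    by (simp add: ortho_prev_def ortho_subleading_def algebra_simps)
qed

lemma toda_beta_identity:
  assumes "n \<ge> 1"
  shows "L (dilation_op a (ortho L n * ortho L n)) / ortho_norm L n
      - L (dilation_op a (ortho L (n - 1) * ortho L (n - 1))) / ortho_norm L (n - 1)
    = ortho_alpha L (n - 1) - ortho_alpha L n + 2"
  using assms ortho_norm_pos[of n] ortho_norm_pos[of "n - 1"]
  by (simp add: dilation_ortho_sq)

lemma toda_alpha_identity:
  "L (dilation_op a (ortho L n * ortho L (Suc n))) / ortho_norm L n
      - L (dilation_op a (ortho_prev L n * ortho L n)) / ortho_norm L (n - 1) - ortho_alpha L n
    = ortho_beta L n - ortho_beta L (Suc n)"
  using dilation_prev_ortho[of a "Suc n"] dilation_prev_ortho[of a n]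
    ortho_norm_pos[of n] ortho_norm_pos[of "n - 1"]
  by (simp add: ortho_prev_def ortho_alpha_eq_subleading)

end

section \<open>Differentiable families of functionals\<close>

text \<open>The uniform degree bound makes \<open>L s (P s)\<close> a fixed finite combination of the
  values \<open>L s (monom 1 j)\<close>.\<close>
definition has_coeff_derivative :: "(real \<Rightarrow> real poly) \<Rightarrow> real poly \<Rightarrow> real \<Rightarrow> bool" where
  "has_coeff_derivative P Q s0 \<longleftrightarrow> (\<exists>N. \<forall>s. deg_below (P s) N) \<and>
     (\<forall>i. ((\<lambda>s. coeff (P s) i) has_real_derivative coeff Q i) (at s0))"

lemma has_coeff_derivative_const: "has_coeff_derivative (\<lambda>s. p) 0 s0"
  unfolding has_coeff_derivative_def by (auto simp: deg_below_iff)

lemma has_coeff_derivative_diff: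
  assumes "has_coeff_derivative P Q s0" and "has_coeff_derivative R S s0"
  shows "has_coeff_derivative (\<lambda>s. P s - R s) (Q - S) s0"
proof -
  obtain N M where "\<And>s. deg_below (P s) N" "\<And>s. deg_below (R s) M"
    using assms unfolding has_coeff_derivative_def by blast
  then have "deg_below (P s - R s) (max N M)" for s
    by (meson deg_below_diff deg_below_mono max.cobounded1 max.cobounded2)
  then show ?thesis
    using assms unfolding has_coeff_derivative_def by (auto intro: DERIV_diff)
qed

lemma has_coeff_derivative_smult:
  assumes "(f has_real_derivative f') (at s0)" and "has_coeff_derivative P Q s0"
  shows "has_coeff_derivative (\<lambda>s. smult (f s) (P s)) (smult f' (P s0) + smult (f s0) Q) s0"
  using assms unfolding has_coeff_derivative_def
  by (auto intro!: deg_below_smult derivative_eq_intros)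

lemma has_coeff_derivative_mult:
  assumes "has_coeff_derivative P Q s0" and "has_coeff_derivative R S s0"
  shows "has_coeff_derivative (\<lambda>s. P s * R s) (Q * R s0 + P s0 * S) s0"
proof -
  obtain N M where "\<And>s. deg_below (P s) N" "\<And>s. deg_below (R s) M"
    using assms unfolding has_coeff_derivative_def by blast
  then have "deg_below (P s * R s) (N + M)" for s
    by (rule deg_below_mult)
  moreover have "((\<lambda>s. coeff (P s * R s) i) has_real_derivative coeff (Q * R s0 + P s0 * S) i) (at s0)" for i
    using assms unfolding has_coeff_derivative_def coeff_mult coeff_add sum.distrib[symmetric]
    by (auto intro!: derivative_eq_intros simp: mult.commute)
  ultimately show ?thesis
    unfolding has_coeff_derivative_def by blast
qed

lemma has_coeff_derivative_coeff_const:
  assumes "has_coeff_derivative P Q s0" and "\<And>s. coeff (P s) i = c"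
  shows "coeff Q i = 0"
proof -
  have "(\<lambda>s. coeff (P s) i) = (\<lambda>s. c)"
    using assms(2) by simp
  then have "((\<lambda>s. c) has_real_derivative coeff Q i) (at s0)"
    using assms(1) unfolding has_coeff_derivative_def by metis
  then show ?thesis
    using DERIV_const DERIV_unique by blast
qed

lemma has_coeff_derivative_deg_below:
  assumes "has_coeff_derivative P Q s0" and "\<And>s. deg_below (P s) N"
  shows "deg_below Q N"
  unfolding deg_below_def
proof (intro allI impI)
  fix i assume "N \<le> i"
  then show "coeff Q i = 0"
    using assms by (intro has_coeff_derivative_coeff_const[of P Q s0 i 0]) (auto simp: deg_below_def)
qed

lemma has_coeff_derivative_functional:
  assumes lin: "eventually (\<lambda>s. lin_functional (L s)) (nhds s0)" and lin': "lin_functional L'"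
    and deriv: "\<And>p. ((\<lambda>s. L s p) has_real_derivative L' p) (at s0)"
    and P: "has_coeff_derivative P Q s0"
  shows "((\<lambda>s. L s (P s)) has_real_derivative L' (P s0) + L s0 Q) (at s0)"
proof -
  obtain N where N: "\<And>s. deg_below (P s) N"
    using P unfolding has_coeff_derivative_def by blast
  have expand: "eventually (\<lambda>s. L s (P s) = (\<Sum>j<N. coeff (P s) j * L s (monom 1 j))) (nhds s0)"
    using lin by eventually_elim (rule lin_functional.eq_sum_monom[OF _ N])
  have "((\<lambda>s. \<Sum>j<N. coeff (P s) j * L s (monom 1 j)) has_real_derivative
      (\<Sum>j<N. coeff Q j * L s0 (monom 1 j) + coeff (P s0) j * L' (monom 1 j))) (at s0)"
    using P deriv unfolding has_coeff_derivative_def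
    by (auto intro!: derivative_eq_intros simp: mult.commute)
  also have "(\<Sum>j<N. coeff Q j * L s0 (monom 1 j) + coeff (P s0) j * L' (monom 1 j)) = L' (P s0) + L s0 Q"
    using lin_functional.eq_sum_monom[OF lin' N] eventually_nhds_x_imp_x[OF lin]
      lin_functional.eq_sum_monom[OF _ has_coeff_derivative_deg_below[OF P N]]
    by (simp add: sum.distrib mult.commute)
  finally show ?thesis
    using DERIV_cong_ev[OF refl expand refl] by simp
qed

locale diff_family =
  fixes L :: "real \<Rightarrow> real poly \<Rightarrow> real" and L' :: "real poly \<Rightarrow> real" and s0 :: real
  assumes posdef_near: "eventually (\<lambda>s. posdef_functional (L s)) (nhds s0)"
    and lin_deriv: "lin_functional L'"
    and has_deriv: "((\<lambda>s. L s p) has_real_derivative L' p) (at s0)"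
begin

lemma posdef_at: "posdef_functional (L s0)"
  using posdef_near eventually_nhds_x_imp_x by blast

lemma has_deriv_comp:
  assumes "has_coeff_derivative P Q s0"
  shows "((\<lambda>s. L s (P s)) has_real_derivative L' (P s0) + L s0 Q) (at s0)"
proof (rule has_coeff_derivative_functional[OF _ lin_deriv has_deriv assms])
  show "eventually (\<lambda>s. lin_functional (L s)) (nhds s0)"
    using posdef_near by (rule eventually_mono) (rule posdef_functional.axioms(1))
qed

lemma ortho_norm_at_nonzero: "ortho_norm (L s0) n \<noteq> 0"
  using posdef_functional.ortho_norm_pos[OF posdef_at, of n] by simp

lemma ortho_norm_differentiable:
  assumes "has_coeff_derivative (\<lambda>s. ortho (L s) n) Q s0"
  shows "\<exists>d. ((\<lambda>s. ortho_norm (L s) n) has_real_derivative d) (at s0)"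
  using has_deriv_comp[OF has_coeff_derivative_mult[OF assms assms]] unfolding ortho_norm_def by blast

lemma ortho_alpha_differentiable:
  assumes P: "has_coeff_derivative (\<lambda>s. ortho (L s) n) Q s0"
  shows "\<exists>d. ((\<lambda>s. ortho_alpha (L s) n) has_real_derivative d) (at s0)"
proof -
  obtain h where h: "((\<lambda>s. ortho_norm (L s) n) has_real_derivative h) (at s0)"
    using ortho_norm_differentiable[OF P] by blast
  obtain x where "((\<lambda>s. L s ([:0, 1:] * ortho (L s) n * ortho (L s) n)) has_real_derivative x) (at s0)"
    using has_deriv_comp[OF has_coeff_derivative_mult[OF has_coeff_derivative_mult[OF
        has_coeff_derivative_const P] P]] by blast
  from DERIV_divide[OF this h ortho_norm_at_nonzero] show ?thesis
    unfolding ortho_alpha_def by blast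
qed

lemma ortho_beta_differentiable:
  assumes "has_coeff_derivative (\<lambda>s. ortho (L s) n) Q s0"
    and "has_coeff_derivative (\<lambda>s. ortho (L s) (n - 1)) R s0"
  shows "\<exists>d. ((\<lambda>s. ortho_beta (L s) n) has_real_derivative d) (at s0)"
proof -
  obtain h h1 where "((\<lambda>s. ortho_norm (L s) n) has_real_derivative h) (at s0)"
    and "((\<lambda>s. ortho_norm (L s) (n - 1)) has_real_derivative h1) (at s0)"
    using ortho_norm_differentiable[OF assms(1)] ortho_norm_differentiable[OF assms(2)] by blast
  from DERIV_divide[OF this ortho_norm_at_nonzero] show ?thesis
    by (cases "n = 0") (auto simp: ortho_beta_def intro: DERIV_const)
qed

lemma ortho_has_coeff_derivative: "\<exists>Q. has_coeff_derivative (\<lambda>s. ortho (L s) n) Q s0"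
proof (induction n rule: less_induct)
  case (less n)
  show ?case
  proof (cases n)
    case 0
    then show ?thesis
      using has_coeff_derivative_const by auto
  next
    case (Suc k)
    obtain P where P: "has_coeff_derivative (\<lambda>s. ortho (L s) k) P s0"
      using less.IH[of k] Suc by auto
    obtain P1 where P1: "has_coeff_derivative (\<lambda>s. ortho (L s) (k - 1)) P1 s0"
      using less.IH[of "k - 1"] Suc by force
    have prev: "has_coeff_derivative (\<lambda>s. ortho_prev (L s) k) (if k = 0 then 0 else P1) s0"
      using P1 by (cases "k = 0") (simp_all add: ortho_prev_def has_coeff_derivative_const)
    obtain a' b' where a': "((\<lambda>s. ortho_alpha (L s) k) has_real_derivative a') (at s0)"
      and b': "((\<lambda>s. ortho_beta (L s) k) has_real_derivative b') (at s0)"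
      using ortho_alpha_differentiable[OF P] ortho_beta_differentiable[OF P P1] by blast
    show ?thesis
      unfolding Suc ortho_Suc
      using has_coeff_derivative_diff[OF has_coeff_derivative_diff[OF
          has_coeff_derivative_mult[OF has_coeff_derivative_const P] has_coeff_derivative_smult[OF a' P]]
          has_coeff_derivative_smult[OF b' prev]]
      by blast
  qed
qed

lemma ortho_deriv_deg_below:
  assumes Q: "has_coeff_derivative (\<lambda>s. ortho (L s) n) Q s0"
  shows "deg_below Q n"
proof -
  have "deg_below Q (Suc n)"
    using has_coeff_derivative_deg_below[OF Q deg_below_ortho] .
  moreover have "coeff Q n = 0"
    using has_coeff_derivative_coeff_const[OF Q coeff_ortho_self] .
  ultimately show ?thesis
    unfolding deg_below_def by (metis le_antisym not_less_eq_eq)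
qed

lemma ortho_norm_deriv:
  "((\<lambda>s. ortho_norm (L s) n) has_real_derivative L' (ortho (L s0) n * ortho (L s0) n)) (at s0)"
proof -
  interpret L0: posdef_functional "L s0"
    by (rule posdef_at)
  obtain Q where Q: "has_coeff_derivative (\<lambda>s. ortho (L s) n) Q s0"
    using ortho_has_coeff_derivative by blast
  have "L s0 (Q * ortho (L s0) n) = 0"
    by (rule L0.orthogonal[OF ortho_deriv_deg_below[OF Q]])
  then have "L s0 (Q * ortho (L s0) n + ortho (L s0) n * Q) = 0"
    by (simp only: mult.commute[of "ortho (L s0) n" Q] L0.add add_0)
  then show ?thesis
    using has_deriv_comp[OF has_coeff_derivative_mult[OF Q Q]] unfolding ortho_norm_def by simp
qed

text \<open>Differentiating the orthogonality relation \<open>L s (P\<^sub>m(s\<^sub>0) * P\<^sub>m\<^sub>+\<^sub>1(s)) = 0\<close>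
  isolates the derivative of the subleading coefficient of \<open>P\<^sub>m\<^sub>+\<^sub>1\<close>.\<close>
lemma ortho_subleading_deriv:
  "((\<lambda>s. ortho_subleading (L s) n) has_real_derivative
     - L' (ortho_prev (L s0) n * ortho (L s0) n) / ortho_norm (L s0) (n - 1)) (at s0)"
proof (cases n)
  case 0
  then show ?thesis
    using lin_functional.zero[OF lin_deriv] by (simp add: ortho_subleading_def ortho_prev_def)
next
  case (Suc m)
  interpret L0: posdef_functional "L s0"
    by (rule posdef_at)
  define C where "C = ortho (L s0) m"
  obtain Q where Q: "has_coeff_derivative (\<lambda>s. ortho (L s) (Suc m)) Q s0"
    using ortho_has_coeff_derivative by blast
  have "eventually (\<lambda>s. L s (C * ortho (L s) (Suc m)) = 0) (nhds s0)"
    using posdef_near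
    by eventually_elim (simp add: posdef_functional.orthogonal C_def deg_below_ortho)
  then have "((\<lambda>s. L s (C * ortho (L s) (Suc m))) has_real_derivative 0) (at s0)"
    by (simp add: DERIV_cong_ev[OF refl _ refl, of _ "\<lambda>_. 0"])
  moreover have "((\<lambda>s. L s (C * ortho (L s) (Suc m))) has_real_derivative
      L' (C * ortho (L s0) (Suc m)) + L s0 (C * Q)) (at s0)"
    using has_deriv_comp[OF has_coeff_derivative_mult[OF has_coeff_derivative_const Q]] by simp
  ultimately have sum0: "L' (C * ortho (L s0) (Suc m)) + L s0 (C * Q) = 0"
    using DERIV_unique by blast
  have dQ: "deg_below Q (Suc m)"
    by (rule ortho_deriv_deg_below[OF Q])
  have "L s0 (C * Q) = coeff Q m * ortho_norm (L s0) m + L s0 ((Q - smult (coeff Q m) C) * C)"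
    by (simp add: C_def ortho_norm_def algebra_simps)
  also have "L s0 ((Q - smult (coeff Q m) C) * C) = 0"
    unfolding C_def by (rule L0.orthogonal[OF deg_below_sub_ortho[OF dQ]])
  finally have "coeff Q m = - L' (C * ortho (L s0) (Suc m)) / ortho_norm (L s0) m"
    using sum0 L0.ortho_norm_pos[of m] by (simp add: field_simps)
  moreover have "((\<lambda>s. coeff (ortho (L s) (Suc m)) m) has_real_derivative coeff Q m) (at s0)"
    using Q unfolding has_coeff_derivative_def by blast
  ultimately show ?thesis
    using Suc by (simp add: ortho_subleading_def ortho_prev_def C_def)
qed

lemma ortho_alpha_deriv:
  "((\<lambda>s. ortho_alpha (L s) n) has_real_derivative
     L' (ortho (L s0) n * ortho (L s0) (Suc n)) / ortho_norm (L s0) n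
     - L' (ortho_prev (L s0) n * ortho (L s0) n) / ortho_norm (L s0) (n - 1)) (at s0)"
  using DERIV_diff[OF ortho_subleading_deriv[of n] ortho_subleading_deriv[of "Suc n"]]
  by (simp add: ortho_alpha_eq_subleading ortho_prev_def)

lemma ln_ortho_beta_deriv:
  assumes "n \<ge> 1"
  shows "((\<lambda>s. ln (ortho_beta (L s) n)) has_real_derivative
     L' (ortho (L s0) n * ortho (L s0) n) / ortho_norm (L s0) n
     - L' (ortho (L s0) (n - 1) * ortho (L s0) (n - 1)) / ortho_norm (L s0) (n - 1)) (at s0)"
proof -
  have pos: "ortho_norm (L s0) i > 0" for i
    using posdef_functional.ortho_norm_pos[OF posdef_at] .
  have ln_norm: "((\<lambda>s. ln (ortho_norm (L s) i)) has_real_derivative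
      L' (ortho (L s0) i * ortho (L s0) i) / ortho_norm (L s0) i) (at s0)" for i
    using DERIV_chain2[OF DERIV_ln_divide[OF pos] ortho_norm_deriv] by simp
  have "eventually (\<lambda>s. ln (ortho_beta (L s) n) =
      ln (ortho_norm (L s) n) - ln (ortho_norm (L s) (n - 1))) (nhds s0)"
    using posdef_near
  proof eventually_elim
    case (elim s)
    then show ?case
      using assms posdef_functional.ortho_norm_pos[OF elim, of n]
        posdef_functional.ortho_norm_pos[OF elim, of "n - 1"]
      by (simp add: ortho_beta_def ln_div)
  qed
  then show ?thesis
    by (simp add: DERIV_cong_ev[OF refl _ refl] DERIV_diff[OF ln_norm ln_norm])
qed

end

section \<open>Integrals against the gamma weight\<close>

lemma integral_pos_if_pos_on_interval:
  fixes g :: "real \<Rightarrow> real"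
  assumes "integrable lborel g" and "\<And>x. 0 \<le> g x" and "u < v"
    and "AE x in lborel. x \<in> {u<..<v} \<longrightarrow> 0 < g x"
  shows "integral\<^sup>L lborel g > 0"
proof -
  have "integral\<^sup>L lborel g \<noteq> 0"
  proof
    assume "integral\<^sup>L lborel g = 0"
    then have "AE x in lborel. g x = 0"
      using integral_nonneg_eq_0_iff_AE assms(1,2) by blast
    with assms(4) have "AE x in lborel. x \<notin> {u<..<v}"
      by eventually_elim auto
    then have "emeasure lborel {u<..<v} = 0"
      by (subst (asm) AE_iff_measurable[of "{u<..<v}"]) auto
    with assms(3) show False
      by simp
  qed
  moreover have "integral\<^sup>L lborel g \<ge> 0"
    using assms(2) by simp
  ultimately show ?thesis
    by simp
qed

definition gamma_weight :: "real \<Rightarrow> real \<Rightarrow> real" where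
  "gamma_weight a x = x powr a * exp (- x)"

lemma set_integrable_power_gamma_weight:
  assumes "a > -1"
  shows "set_integrable lborel {0<..} (\<lambda>x. x ^ j * gamma_weight a x)"
proof -
  have "real j + a + 1 > 0"
    using assms by simp
  from Gamma_conv_nn_integral_real[OF this]
  have "integrable lborel (\<lambda>x. indicator {0..} x * x powr (real j + a) / exp x)"
    by (intro integrableI_nn_integral_finite[where x = "Gamma (real j + a + 1)"]) auto
  also have "(\<lambda>x. indicator {0..} x * x powr (real j + a) / exp x) =
      (\<lambda>x. indicator {0<..} x *\<^sub>R (x ^ j * gamma_weight a x))"
  proof
    fix x :: real
    show "indicator {0..} x * x powr (real j + a) / exp x = indicator {0<..} x *\<^sub>R (x ^ j * gamma_weight a x)"
    proof (cases "x > 0")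
      case True
      then show ?thesis
        by (simp add: gamma_weight_def powr_add powr_realpow exp_minus field_simps)
    qed (cases "x = 0"; auto simp: indicator_def)
  qed
  finally show ?thesis
    unfolding set_integrable_def .
qed

lemma set_integrable_poly_gamma_weight:
  assumes "a > -1" and "c \<ge> 0"
  shows "set_integrable lborel {c<..} (\<lambda>x. poly p x * gamma_weight a x)"
proof -
  have "set_integrable lborel {0<..} (\<lambda>x. coeff p i * (x ^ i * gamma_weight a x))" for i
    using set_integrable_power_gamma_weight[OF assms(1)] by (rule set_integrable_mult_right)
  then have "set_integrable lborel {0<..} (\<lambda>x. \<Sum>i\<le>degree p. coeff p i * (x ^ i * gamma_weight a x))"
    unfolding set_integrable_def scaleR_sum_right by (intro Bochner_Integration.integrable_sum)
  then have "set_integrable lborel {0<..} (\<lambda>x. poly p x * gamma_weight a x)"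
    by (simp add: poly_altdef sum_distrib_right mult.assoc)
  then show ?thesis
    by (rule set_integrable_subset) (use assms(2) in auto)
qed

definition tail_integral :: "real \<Rightarrow> real \<Rightarrow> real poly \<Rightarrow> real" where
  "tail_integral a c p = (LINT x:{c<..}|lborel. poly p x * gamma_weight a x)"

lemma lin_functional_tail_integral: "a > -1 \<Longrightarrow> c \<ge> 0 \<Longrightarrow> lin_functional (tail_integral a c)"
  unfolding lin_functional_def tail_integral_def
  by (auto simp: distrib_right mult.assoc intro!: set_integrable_poly_gamma_weight)

lemma tendsto_powr_exp_poly_at_top: "((\<lambda>x::real. x powr b * exp (- x) * poly p x) \<longlongrightarrow> 0) at_top"
proof -
  have "((\<lambda>x::real. \<Sum>i\<le>degree p. coeff p i * (x ^ i * x powr b * exp (- x))) \<longlongrightarrow>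
      (\<Sum>i\<le>degree p. coeff p i * 0)) at_top"
    by (intro tendsto_sum tendsto_mult tendsto_const) real_asymp
  then show ?thesis
    by (simp add: poly_altdef sum_distrib_left sum_distrib_right mult_ac)
qed

lemma has_real_derivative_dilation_op:
  assumes "x > 0"
  shows "((\<lambda>x. x powr (a + 1) * exp (- x) * poly p x) has_real_derivative
      poly (dilation_op a p) x * gamma_weight a x) (at x)"
proof -
  have "((\<lambda>x. x powr (a + 1) * exp (- x) * poly p x) has_real_derivative
      (a + 1) * x powr (a + 1 - 1) * exp (- x) * poly p x + x powr (a + 1) * (- exp (- x)) * poly p x
      + x powr (a + 1) * exp (- x) * poly (pderiv p) x) (at x)"
    by (intro DERIV_mult[THEN DERIV_cong] has_real_derivative_powr assms poly_DERIV
        DERIV_exp[THEN DERIV_chain2[of exp]] derivative_eq_intros, auto simp: algebra_simps)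
  moreover have "x powr (a + 1) = x * x powr a"
    using assms by (simp add: powr_add)
  ultimately show ?thesis
    by (simp add: gamma_weight_def dilation_op_def algebra_simps)
qed

lemma tail_integral_dilation_op:
  assumes a: "a > -1" and c: "c \<ge> 0"
  shows "tail_integral a c (dilation_op a p) = - (c powr (a + 1) * exp (- c) * poly p c)"
proof -
  define F where "F x = x powr (a + 1) * exp (- x) * poly p x" for x
  define f where "f x = poly (dilation_op a p) x * gamma_weight a x" for x
  have deriv: "(F has_real_derivative f x) (at x)" if "x > 0" for x
    unfolding F_def f_def by (rule has_real_derivative_dilation_op[OF that])
  have "(LBINT x=ereal c..\<infinity>. f x) = 0 - F c"
  proof (rule interval_integral_FTC_integrable)
    show "(F has_vector_derivative f x) (at x)" if "ereal c < ereal x" "ereal x < \<infinity>" for x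
      using deriv[of x] that c by (simp add: has_real_derivative_iff_has_vector_derivative)
    show "isCont f x" if "ereal c < ereal x" "ereal x < \<infinity>" for x
      using that c unfolding f_def gamma_weight_def by (auto intro!: continuous_intros)
    show "set_integrable lborel (einterval (ereal c) \<infinity>) f"
      unfolding f_def using set_integrable_poly_gamma_weight[OF a c] by simp
    have "((\<lambda>x. x powr (a + 1)) \<longlongrightarrow> c powr (a + 1)) (at_right c)"
    proof (cases "c = 0")
      case True
      then show ?thesis
        using a by (auto intro!: tendsto_zero_powrI tendsto_ident_at eventually_at_rightI[of 0 1])
    qed (use c in \<open>auto intro!: tendsto_intros\<close>)
    then have "(F \<longlongrightarrow> F c) (at_right c)"
      unfolding F_def by (intro tendsto_mult) (auto intro!: tendsto_intros)
    then show "((F \<circ> real_of_ereal) \<longlongrightarrow> F c) (at_right (ereal c))"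
      by (simp add: ereal_tendsto_simps)
    show "((F \<circ> real_of_ereal) \<longlongrightarrow> 0) (at_left \<infinity>)"
      unfolding ereal_tendsto_simps F_def by (rule tendsto_powr_exp_poly_at_top)
  qed simp
  then show ?thesis
    by (simp add: tail_integral_def f_def interval_lebesgue_integral_def F_def)
qed

lemma tail_integral_deriv:
  assumes a: "a > -1" and c: "c > 0"
  shows "((\<lambda>s. tail_integral a s p) has_real_derivative - (poly p c * gamma_weight a c)) (at c)"
proof -
  define f where "f x = poly p x * gamma_weight a x" for x
  have "continuous_on {c/2..2*c} f"
    unfolding f_def gamma_weight_def using c by (auto intro!: continuous_intros)
  then have "((\<lambda>u. LBINT y=ereal (c/2)..ereal u. f y) has_vector_derivative f c) (at c within {c/2..2*c})"
    using c by (intro interval_integral_FTC2) auto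
  then have head: "((\<lambda>u. LBINT y=ereal (c/2)..ereal u. f y) has_real_derivative f c) (at c)"
    using c by (subst (asm) at_within_interior) (auto simp: has_real_derivative_iff_has_vector_derivative)
  have "eventually (\<lambda>s. s \<in> {0<..}) (nhds c)"
    using c by (intro eventually_nhds_in_open) auto
  then have "eventually (\<lambda>s. tail_integral a s p =
      tail_integral a (c/2) p - (LBINT y=ereal (c/2)..ereal s. f y)) (nhds c)"
  proof eventually_elim
    case (elim s)
    have "interval_lebesgue_integrable lborel (min (ereal (c/2)) (min (ereal s) \<infinity>))
        (max (ereal (c/2)) (max (ereal s) \<infinity>)) f"
      unfolding interval_lebesgue_integrable_def f_def using elim c
      by (cases "s \<le> c/2") (auto intro!: set_integrable_poly_gamma_weight[OF a] simp: min_def)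
    from interval_integral_sum[OF this] show ?case
      by (simp add: tail_integral_def interval_lebesgue_integral_def f_def)
  qed
  then show ?thesis
    using DERIV_diff[OF DERIV_const[of "tail_integral a (c/2) p" "at c"] head]
    by (simp add: DERIV_cong_ev[OF refl _ refl] f_def)
qed

section \<open>The weight with jumps\<close>

definition jump_factor :: "(nat \<Rightarrow> real) \<Rightarrow> nat \<Rightarrow> (nat \<Rightarrow> real) \<Rightarrow> real \<Rightarrow> real" where
  "jump_factor \<omega> m t x = \<omega> 0 + (\<Sum>k=1..m. \<omega> k * heaviside (x - t k))"

lemma lweight_eq: "lweight a \<omega> m t x = gamma_weight a x * jump_factor \<omega> m t x"
  by (simp add: lweight_def gamma_weight_def jump_factor_def)

lemma jump_factor_eq_partial_sum:
  assumes "l \<le> m" and "\<And>k. k \<in> {1..m} \<Longrightarrow> t k < x \<longleftrightarrow> k \<le> l"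
  shows "jump_factor \<omega> m t x = (\<Sum>k=0..l. \<omega> k)"
proof -
  have "(\<Sum>k=1..m. \<omega> k * heaviside (x - t k)) = (\<Sum>k\<in>{1..m}. if k \<le> l then \<omega> k else 0)"
    using assms(2) by (intro sum.cong) (auto simp: heaviside_def)
  also have "\<dots> = (\<Sum>k\<in>{k\<in>{1..m}. k \<le> l}. \<omega> k)"
    by (rule sum.inter_filter[symmetric]) simp
  also have "{k\<in>{1..m}. k \<le> l} = {1..l}"
    using assms(1) by auto
  finally show ?thesis
    by (simp add: jump_factor_def sum.atLeast_Suc_atMost)
qed

lemma indicator_mult_lweight:
  assumes "\<forall>k\<in>{1..m}. t k \<ge> 0"
  shows "indicator {0<..} x *\<^sub>R (poly p x * lweight a \<omega> m t x) =
      \<omega> 0 * (indicator {0<..} x *\<^sub>R (poly p x * gamma_weight a x))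
      + (\<Sum>k=1..m. \<omega> k * (indicator {t k<..} x *\<^sub>R (poly p x * gamma_weight a x)))"
proof -
  have "indicator {0<..} x * heaviside (x - t k) = (indicator {t k<..} x :: real)" if "k \<in> {1..m}" for k
    using assms that by (force simp: indicator_def heaviside_def)
  then have "(\<Sum>k=1..m. \<omega> k * (indicator {t k<..} x *\<^sub>R (poly p x * gamma_weight a x))) =
      (\<Sum>k=1..m. indicator {0<..} x * (\<omega> k * heaviside (x - t k)) * (poly p x * gamma_weight a x))"
    by (intro sum.cong) (auto simp: algebra_simps)
  then show ?thesis
    by (simp add: lweight_eq jump_factor_def sum_distrib_left sum_distrib_right algebra_simps)
qed

lemma integrable_lweight:
  assumes "a > -1" and "\<forall>k\<in>{1..m}. t k \<ge> 0"
  shows "integrable lborel (\<lambda>x. indicator {0<..} x *\<^sub>R (poly p x * lweight a \<omega> m t x))"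
proof -
  have "integrable lborel (\<lambda>x. indicator {c<..} x *\<^sub>R (poly p x * gamma_weight a x))" if "c \<ge> 0" for c
    using set_integrable_poly_gamma_weight[OF assms(1) that] unfolding set_integrable_def .
  then show ?thesis
    unfolding indicator_mult_lweight[OF assms(2)] using assms(2)
    by (auto intro!: Bochner_Integration.integrable_sum)
qed

lemma weight_functional_lweight:
  assumes "a > -1" and "\<forall>k\<in>{1..m}. t k \<ge> 0"
  shows "weight_functional (lweight a \<omega> m t) p =
      \<omega> 0 * tail_integral a 0 p + (\<Sum>k=1..m. \<omega> k * tail_integral a (t k) p)"
proof -
  have "integrable lborel (\<lambda>x. indicator {c<..} x *\<^sub>R (poly p x * gamma_weight a x))" if "c \<ge> 0" for c
    using set_integrable_poly_gamma_weight[OF assms(1) that] unfolding set_integrable_def .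
  then show ?thesis
    unfolding weight_functional_def tail_integral_def set_lebesgue_integral_def
      indicator_mult_lweight[OF assms(2)]
    using assms(2)
    by (subst Bochner_Integration.integral_add)
      (auto simp: Bochner_Integration.integral_sum)
qed

locale jump_weight =
  fixes a :: real and m :: nat and t \<omega> :: "nat \<Rightarrow> real"
  assumes a_gt: "a > -1"
    and t_1_pos: "0 < t 1"
    and t_increasing: "\<forall>k\<in>{1..<m}. t k < t (Suc k)"
    and partial_sums_nonneg: "\<forall>l\<le>m. (\<Sum>k=0..l. \<omega> k) \<ge> 0"
    and partial_sum_pos: "\<exists>l\<le>m. (\<Sum>k=0..l. \<omega> k) > 0"
begin

lemma t_less: "1 \<le> i \<Longrightarrow> i < j \<Longrightarrow> j \<le> m \<Longrightarrow> t i < t j"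
proof (induction j)
  case (Suc j)
  then have "t j < t (Suc j)"
    using t_increasing by auto
  with Suc show ?case
    by (cases "i = j") auto
qed simp

lemma t_le: "1 \<le> i \<Longrightarrow> i \<le> j \<Longrightarrow> j \<le> m \<Longrightarrow> t i \<le> t j"
  using t_less[of i j] by (cases "i = j") auto

lemma t_pos: "k \<in> {1..m} \<Longrightarrow> t k > 0"
  using t_le[of 1 k] t_1_pos by force

lemma t_nonneg: "\<forall>k\<in>{1..m}. t k \<ge> 0"
  using t_pos by (simp add: less_imp_le)

lemma jump_index_exists: "\<exists>l\<le>m. \<forall>k\<in>{1..m}. t k < x \<longleftrightarrow> k \<le> l"
proof -
  define K where "K = {k\<in>{1..m}. t k < x}"
  define l where "l = (if K = {} then 0 else Max K)"
  have "finite K"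
    by (simp add: K_def)
  have "t k < x \<longleftrightarrow> k \<le> l" if k: "k \<in> {1..m}" for k
  proof (cases "K = {}")
    case False
    then have "Max K \<in> K"
      using Max_in[OF \<open>finite K\<close>] by blast
    then show ?thesis
      using k False Max_ge[OF \<open>finite K\<close>, of k] t_le[of k "Max K"]
      by (auto simp: l_def K_def)
  qed (use k in \<open>auto simp: l_def K_def\<close>)
  moreover have "l \<le> m"
    using Max_in[OF \<open>finite K\<close>] by (auto simp: l_def K_def)
  ultimately show ?thesis
    by blast
qed

lemma jump_factor_nonneg: "jump_factor \<omega> m t x \<ge> 0"
  using jump_index_exists[of x] jump_factor_eq_partial_sum[of _ m t x \<omega>] partial_sums_nonneg
  by fastforce

lemma jump_factor_pos_interval: "\<exists>u v. 0 \<le> u \<and> u < v \<and> (\<forall>x\<in>{u<..<v}. jump_factor \<omega> m t x > 0)"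
proof -
  obtain l where l: "l \<le> m" "(\<Sum>k=0..l. \<omega> k) > 0"
    using partial_sum_pos by blast
  define u where "u = (if l = 0 then 0 else t l)"
  define v where "v = (if l = m then u + 1 else t (Suc l))"
  have "0 \<le> u"
    unfolding u_def using t_pos[of l] l by auto
  moreover have "u < v"
    unfolding v_def u_def using t_less[of l "Suc l"] t_pos[of 1] l by auto
  moreover have "jump_factor \<omega> m t x = (\<Sum>k=0..l. \<omega> k)" if x: "x \<in> {u<..<v}" for x
  proof (rule jump_factor_eq_partial_sum[OF l(1)])
    fix k assume k: "k \<in> {1..m}"
    show "t k < x \<longleftrightarrow> k \<le> l"
    proof (cases "k \<le> l")
      case True
      then have "t k \<le> u"
        unfolding u_def using t_le[of k l] k l by auto
      with True x show ?thesis
        by auto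
    next
      case False
      then have "v \<le> t k"
        unfolding v_def using t_le[of "Suc l" k] k by auto
      with False x show ?thesis
        by auto
    qed
  qed
  ultimately show ?thesis
    using l(2) by (intro exI[of _ u] exI[of _ v]) auto
qed

lemma posdef_weight: "posdef_functional (weight_functional (lweight a \<omega> m t))"
proof -
  interpret lin_functional "weight_functional (lweight a \<omega> m t)"
    using lin_functional_tail_integral[OF a_gt] t_nonneg
    by unfold_locales
      (auto simp: weight_functional_lweight[OF a_gt t_nonneg] lin_functional_def
        sum.distrib sum_distrib_left algebra_simps)
  show ?thesis
  proof
    fix p :: "real poly" assume p: "p \<noteq> 0"
    define g where "g x = indicator {0<..} x *\<^sub>R (poly (p * p) x * lweight a \<omega> m t x)" for x
    have g_nonneg: "0 \<le> g x" for x
      using jump_factor_nonneg[of x]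
      by (simp add: g_def lweight_eq gamma_weight_def indicator_def)
    obtain u v where uv: "0 \<le> u" "u < v" and pos: "\<forall>x\<in>{u<..<v}. jump_factor \<omega> m t x > 0"
      using jump_factor_pos_interval by blast
    have "AE x in lborel. x \<notin> {x. poly p x = 0}"
      by (rule AE_not_in[OF finite_imp_null_set_lborel[OF poly_roots_finite[OF p]]])
    then have "AE x in lborel. x \<in> {u<..<v} \<longrightarrow> 0 < g x"
    proof eventually_elim
      case (elim x)
      show ?case
      proof
        assume "x \<in> {u<..<v}"
        then have "x > 0" "jump_factor \<omega> m t x > 0"
          using uv pos by auto
        then show "0 < g x"
          using elim by (auto simp: g_def lweight_eq gamma_weight_def zero_less_mult_iff)
      qed
    qed
    moreover have "integrable lborel g"
      unfolding g_def by (rule integrable_lweight[OF a_gt t_nonneg])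
    ultimately have "integral\<^sup>L lborel g > 0"
      using g_nonneg uv(2) by (intro integral_pos_if_pos_on_interval)
    then show "weight_functional (lweight a \<omega> m t) (p * p) > 0"
      unfolding weight_functional_def set_lebesgue_integral_def g_def .
  qed
qed

lemma eventually_jump_weight_update:
  assumes k: "k \<in> {1..m}"
  shows "eventually (\<lambda>s. jump_weight a m (t(k := s)) \<omega>) (nhds (t k))"
proof -
  define lo where "lo = (if k = 1 then 0 else t (k - 1))"
  define hi where "hi = (if k = m then t k + 1 else t (Suc k))"
  have "lo < t k"
    unfolding lo_def using t_pos[OF k] t_less[of "k - 1" k] k by auto
  moreover have "t k < hi"
    unfolding hi_def using t_less[of k "Suc k"] k by auto
  ultimately have "eventually (\<lambda>s. s \<in> {lo<..<hi}) (nhds (t k))"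
    by (intro eventually_nhds_in_open) auto
  then show ?thesis
  proof eventually_elim
    case (elim s)
    have "0 \<le> lo"
      unfolding lo_def using t_pos[of "k - 1"] k by (auto simp: less_imp_le)
    then have "0 < (t(k := s)) 1"
      using elim t_1_pos by (auto simp: lo_def)
    moreover have "(t(k := s)) j < (t(k := s)) (Suc j)" if j: "j \<in> {1..<m}" for j
      using elim j t_increasing by (auto simp: lo_def hi_def)
    ultimately show ?case
      using a_gt partial_sums_nonneg partial_sum_pos by unfold_locales auto
  qed
qed

lemma diff_family_update:
  assumes k: "k \<in> {1..m}"
  shows "diff_family (\<lambda>s. weight_functional (lweight a \<omega> m (t(k := s))))
      (\<lambda>p. - \<omega> k * (poly p (t k) * gamma_weight a (t k))) (t k)"
proof (rule diff_family.intro)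
  show "eventually (\<lambda>s. posdef_functional (weight_functional (lweight a \<omega> m (t(k := s))))) (nhds (t k))"
    using eventually_jump_weight_update[OF k] by eventually_elim (rule jump_weight.posdef_weight)
next
  show "lin_functional (\<lambda>p. - \<omega> k * (poly p (t k) * gamma_weight a (t k)))"
    by (simp add: lin_functional_def algebra_simps)
next
  fix p
  have term_deriv: "((\<lambda>s. \<omega> j * tail_integral a ((t(k := s)) j) p) has_real_derivative
      (if j = k then - \<omega> k * (poly p (t k) * gamma_weight a (t k)) else 0)) (at (t k))" for j
    using DERIV_cmult[OF tail_integral_deriv[OF a_gt t_pos[OF k]], of "\<omega> k"] by auto
  have "eventually (\<lambda>s. weight_functional (lweight a \<omega> m (t(k := s))) p =
      \<omega> 0 * tail_integral a 0 p + (\<Sum>j=1..m. \<omega> j * tail_integral a ((t(k := s)) j) p)) (nhds (t k))"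
    using eventually_jump_weight_update[OF k]
    by eventually_elim (rule weight_functional_lweight[OF a_gt jump_weight.t_nonneg])
  moreover have "((\<lambda>s. \<omega> 0 * tail_integral a 0 p + (\<Sum>j=1..m. \<omega> j * tail_integral a ((t(k := s)) j) p))
      has_real_derivative - \<omega> k * (poly p (t k) * gamma_weight a (t k))) (at (t k))"
  proof -
    have "((\<lambda>s. \<Sum>j=1..m. \<omega> j * tail_integral a ((t(k := s)) j) p) has_real_derivative
        (\<Sum>j=1..m. if j = k then - \<omega> k * (poly p (t k) * gamma_weight a (t k)) else 0)) (at (t k))"
      by (rule DERIV_sum) (rule term_deriv)
    then show ?thesis
      using DERIV_add[OF DERIV_const] k by fastforce
  qed
  ultimately show "((\<lambda>s. weight_functional (lweight a \<omega> m (t(k := s))) p) has_real_derivative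
      - \<omega> k * (poly p (t k) * gamma_weight a (t k))) (at (t k))"
    by (simp add: DERIV_cong_ev[OF refl _ refl])
qed

lemma weight_functional_dilation_op:
  "weight_functional (lweight a \<omega> m t) (dilation_op a q) =
     (\<Sum>k=1..m. t k * (- \<omega> k * (poly q (t k) * gamma_weight a (t k))))"
proof -
  have "weight_functional (lweight a \<omega> m t) (dilation_op a q) =
      (\<Sum>k=1..m. \<omega> k * - (t k powr (a + 1) * exp (- t k) * poly q (t k)))"
    using t_nonneg
    by (simp add: weight_functional_lweight[OF a_gt t_nonneg] tail_integral_dilation_op[OF a_gt])
  also have "\<dots> = (\<Sum>k=1..m. t k * (- \<omega> k * (poly q (t k) * gamma_weight a (t k))))"
  proof (rule sum.cong[OF refl])
    fix k assume "k \<in> {1..m}"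
    then have "t k powr (a + 1) = t k * t k powr a"
      using t_pos[of k] by (simp add: powr_add)
    then show "\<omega> k * - (t k powr (a + 1) * exp (- t k) * poly q (t k)) =
        t k * (- \<omega> k * (poly q (t k) * gamma_weight a (t k)))"
      by (simp add: gamma_weight_def)
  qed
  finally show ?thesis .
qed

lemma toda_ln_beta:
  assumes n: "n \<ge> 1"
  shows "\<exists>d :: nat \<Rightarrow> real.
    (\<forall>k\<in>{1..m}. ((\<lambda>s. ln (rec_beta (lweight a \<omega> m (t(k := s))) n)) has_real_derivative d k) (at (t k))) \<and>
    (\<Sum>k=1..m. t k * d k) = rec_alpha (lweight a \<omega> m t) (n - 1) - rec_alpha (lweight a \<omega> m t) n + 2"
proof -
  define L0 where "L0 = weight_functional (lweight a \<omega> m t)"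
  interpret L0: posdef_functional L0
    unfolding L0_def by (rule posdef_weight)
  define D where "D k p = - \<omega> k * (poly p (t k) * gamma_weight a (t k))" for k p
  define d where "d k = D k (ortho L0 n * ortho L0 n) / ortho_norm L0 n
    - D k (ortho L0 (n - 1) * ortho L0 (n - 1)) / ortho_norm L0 (n - 1)" for k
  have "((\<lambda>s. ln (rec_beta (lweight a \<omega> m (t(k := s))) n)) has_real_derivative d k) (at (t k))"
    if k: "k \<in> {1..m}" for k
  proof -
    interpret F: diff_family "\<lambda>s. weight_functional (lweight a \<omega> m (t(k := s)))" "D k" "t k"
      unfolding D_def by (rule diff_family_update[OF k])
    have "eventually (\<lambda>s. ln (rec_beta (lweight a \<omega> m (t(k := s))) n) =
        ln (ortho_beta (weight_functional (lweight a \<omega> m (t(k := s)))) n)) (nhds (t k))"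
      using F.posdef_near by eventually_elim (simp add: rec_beta_eq_ortho_beta)
    then show ?thesis
      using F.ln_ortho_beta_deriv[OF n] by (simp add: DERIV_cong_ev[OF refl _ refl] d_def L0_def)
  qed
  moreover have "(\<Sum>k=1..m. t k * d k) = ortho_alpha L0 (n - 1) - ortho_alpha L0 n + 2"
  proof -
    have "(\<Sum>k=1..m. t k * D k q) = L0 (dilation_op a q)" for q
      unfolding D_def L0_def weight_functional_dilation_op ..
    then have "(\<Sum>k=1..m. t k * d k) = L0 (dilation_op a (ortho L0 n * ortho L0 n)) / ortho_norm L0 n
        - L0 (dilation_op a (ortho L0 (n - 1) * ortho L0 (n - 1))) / ortho_norm L0 (n - 1)"
      by (simp add: d_def right_diff_distrib sum_subtractf flip: sum_divide_distrib)
    then show ?thesis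
      using L0.toda_beta_identity[OF n] by simp
  qed
  ultimately show ?thesis
    using posdef_weight by (intro exI[of _ d]) (simp add: rec_alpha_eq_ortho_alpha L0_def)
qed

lemma toda_alpha:
  "\<exists>d :: nat \<Rightarrow> real.
    (\<forall>k\<in>{1..m}. ((\<lambda>s. rec_alpha (lweight a \<omega> m (t(k := s))) n) has_real_derivative d k) (at (t k))) \<and>
    (\<Sum>k=1..m. t k * d k) - rec_alpha (lweight a \<omega> m t) n =
      rec_beta (lweight a \<omega> m t) n - rec_beta (lweight a \<omega> m t) (Suc n)"
proof -
  define L0 where "L0 = weight_functional (lweight a \<omega> m t)"
  interpret L0: posdef_functional L0
    unfolding L0_def by (rule posdef_weight)
  define D where "D k p = - \<omega> k * (poly p (t k) * gamma_weight a (t k))" for k p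
  define d where "d k = D k (ortho L0 n * ortho L0 (Suc n)) / ortho_norm L0 n
    - D k (ortho_prev L0 n * ortho L0 n) / ortho_norm L0 (n - 1)" for k
  have "((\<lambda>s. rec_alpha (lweight a \<omega> m (t(k := s))) n) has_real_derivative d k) (at (t k))"
    if k: "k \<in> {1..m}" for k
  proof -
    interpret F: diff_family "\<lambda>s. weight_functional (lweight a \<omega> m (t(k := s)))" "D k" "t k"
      unfolding D_def by (rule diff_family_update[OF k])
    have "eventually (\<lambda>s. rec_alpha (lweight a \<omega> m (t(k := s))) n =
        ortho_alpha (weight_functional (lweight a \<omega> m (t(k := s)))) n) (nhds (t k))"
      using F.posdef_near by eventually_elim (simp add: rec_alpha_eq_ortho_alpha)
    then show ?thesis
      using F.ortho_alpha_deriv by (simp add: DERIV_cong_ev[OF refl _ refl] d_def L0_def)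
  qed
  moreover have "(\<Sum>k=1..m. t k * d k) - ortho_alpha L0 n = ortho_beta L0 n - ortho_beta L0 (Suc n)"
  proof -
    have "(\<Sum>k=1..m. t k * D k q) = L0 (dilation_op a q)" for q
      unfolding D_def L0_def weight_functional_dilation_op ..
    then have "(\<Sum>k=1..m. t k * d k) = L0 (dilation_op a (ortho L0 n * ortho L0 (Suc n))) / ortho_norm L0 n
        - L0 (dilation_op a (ortho_prev L0 n * ortho L0 n)) / ortho_norm L0 (n - 1)"
      by (simp add: d_def right_diff_distrib sum_subtractf flip: sum_divide_distrib)
    then show ?thesis
      using L0.toda_alpha_identity by simp
  qed
  ultimately show ?thesis
    using posdef_weight by (intro exI[of _ d]) (simp add: rec_alpha_eq_ortho_alpha rec_beta_eq_ortho_beta L0_def)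
qed

end

theorem proposition2p9:
  fixes m :: nat and a :: real and t \<omega> :: "nat \<Rightarrow> real"
  assumes "m \<ge> 1" and "a > -1"
    and "0 < t 1" and "\<forall>k\<in>{1..<m}. t k < t (Suc k)"
    and "\<forall>l\<le>m. (\<Sum>k=0..l. \<omega> k) \<ge> 0"
    and "\<exists>l\<le>m. (\<Sum>k=0..l. \<omega> k) > 0"
  shows
    "(\<forall>n\<ge>1. \<exists>d :: nat \<Rightarrow> real.
        (\<forall>k\<in>{1..m}. ((\<lambda>s. ln (rec_beta (lweight a \<omega> m (t(k := s))) n))
                          has_real_derivative d k) (at (t k))) \<and>
        (\<Sum>k=1..m. t k * d k) =
          rec_alpha (lweight a \<omega> m t) (n - 1) - rec_alpha (lweight a \<omega> m t) n + 2)
   \<and> (\<forall>n. \<exists>d :: nat \<Rightarrow> real.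
        (\<forall>k\<in>{1..m}. ((\<lambda>s. rec_alpha (lweight a \<omega> m (t(k := s))) n)
                          has_real_derivative d k) (at (t k))) \<and>
        (\<Sum>k=1..m. t k * d k) - rec_alpha (lweight a \<omega> m t) n =
          rec_beta (lweight a \<omega> m t) n - rec_beta (lweight a \<omega> m t) (Suc n))"
proof -
  interpret jump_weight a m t \<omega>
    using assms(2-6) by unfold_locales
  show ?thesis
    using toda_ln_beta toda_alpha by blast
qed

end
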